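(* Let $c>0$, $d\ge 2$, $m\ge 0$ with $m+\frac d2>1$. Let $\phi_k$ be a real solution, bounded on $[-1,1]$, of $$\big((1-\eta)(1+\eta)^{m+\frac d2}\phi_k'(\eta)\big)'+\Big(\alpha_k-\frac{c^2(1+\eta)}{8}\Big)(1+\eta)^{m+\frac d2-1}\phi_k(\eta)=0,\qquad \eta\in(-1,1),$$ normalized by $\int_{-1}^1(1+t)^{m+\frac d2-1}|\phi_k(t)|^2dt=2^{m+\frac d2-1}$. If $\alpha_k>\frac{c^2}{4}$, then $$\sup_{\eta\in[a_{m,d},1]}\sqrt{(1-\eta)(1+\eta)^{m+\frac d2}}\,|\phi_k(\eta)|\le\sqrt{2^{m+\frac d2+1}\big(m+\tfrac d2-1\big)},\qquad a_{m,d}=\frac{2m+d-2}{2m+d}.$$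
   Context: This is the radial equation of ball prolate spheroidal wave functions $\psi(x)=r^m\phi_k(2r^2-1)Y(\hat x)$, where $\alpha_k=\frac14(\chi^{(m)}_k(c)-m(m+d))$ and $\chi^{(m)}_k(c)$ is the corresponding eigenvalue of $\mathcal{L}_c=-\nabla\cdot(1-\|x\|^2)\nabla-\Delta_0+c^2\|x\|^2$. *)

theory Defs
  imports "HOL-Analysis.Analysis"
begin

end

theory Submission
  imports Defs
begin

text \<open>Write p = m + d/2, A(t) = (1 - t)(1 + t)^p, w(t) = (1 + t)^(p-1) and
  q(t) = \<alpha> - c^2 (1 + t)/8, which is positive on [-1, 1] because \<alpha> > c^2/4.  The equation says
  that the flux P = A \<phi>' satisfies P' = - q w \<phi>.  A bounded solution has P \<rightarrow> 0 at both
  endpoints (otherwise \<phi>' \<ge> const/(1 - t) or const/(1 + t) would make \<phi> grow logarithmically),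
  so the energies E = A \<phi>^2 + P^2/(q w) and F = A w \<phi>^2 + P^2/q vanish there as well.  Along
  the equation E' = A' \<phi>^2 - (q w)' P^2/(q w)^2 and F' = (A w)' \<phi>^2 + c^2 P^2/(8 q^2), and
  (q w)' changes sign only where (p - 1) q = (1 + t) c^2/8.  Integrating E' and F' from \<eta> to 1,
  or from -1 to \<eta>, therefore bounds A \<phi>^2 at \<eta> by 2 (I - Y) or by 2 p Y, and A w \<phi>^2 by
  2^p (I - Y), where Y is the weighted mass of \<phi>^2 on [-1, \<eta>] and I = 2^(p-1) the total mass.
  As 2m + d \<ge> 3 is an integer, p = 3/2 or p \<ge> 2, and for \<eta> \<ge> 0 the three bounds combine to
  A \<phi>^2 \<le> 2^(p+1) (p - 1).\<close>

text \<open>The cross terms 2 R \<phi> \<phi>' and 2 S P P' cancel exactly when R = S A B.\<close>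

lemma energy_has_real_derivative:
  fixes \<phi> P R S :: "real \<Rightarrow> real"
  assumes "(\<phi> has_real_derivative \<phi>') (at t)"
    and "(P has_real_derivative - (B * \<phi> t)) (at t)"
    and "P t = A * \<phi>'"
    and "(R has_real_derivative R') (at t)"
    and "(S has_real_derivative S') (at t)"
    and "R t = S t * A * B"
  shows "((\<lambda>u. R u * (\<phi> u)\<^sup>2 + S u * (P u)\<^sup>2) has_real_derivative R' * (\<phi> t)\<^sup>2 + S' * (P t)\<^sup>2) (at t)"
proof -
  have "((\<lambda>u. R u * (\<phi> u)\<^sup>2 + S u * (P u)\<^sup>2) has_real_derivative
     R' * (\<phi> t)\<^sup>2 + S' * (P t)\<^sup>2 + 2 * \<phi> t * (R t * \<phi>' - S t * P t * B)) (at t)"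
    using assms(1,2,4,5) by (auto intro!: derivative_eq_intros simp: power2_eq_square algebra_simps)
  moreover have "R t * \<phi>' - S t * P t * B = 0"
    using assms(3,6) by (simp add: algebra_simps)
  ultimately show ?thesis by simp
qed

lemma continuous_abs_ge_imp_sign_constant:
  fixes f :: "real \<Rightarrow> real"
  assumes "\<forall>u\<in>{a<..<b}. isCont f u" and "\<forall>u\<in>{a<..<b}. \<epsilon> \<le> \<bar>f u\<bar>" and "0 < \<epsilon>"
  obtains \<sigma> :: real where "\<bar>\<sigma>\<bar> = 1" and "\<forall>u\<in>{a<..<b}. \<epsilon> \<le> \<sigma> * f u"
proof -
  have conn: "connected (f ` {a<..<b})"
    using assms(1) by (intro connected_continuous_image continuous_at_imp_continuous_on) auto
  have "(\<forall>u\<in>{a<..<b}. \<epsilon> \<le> f u) \<or> (\<forall>u\<in>{a<..<b}. \<epsilon> \<le> - f u)"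
  proof (rule ccontr)
    assume "\<not> ?thesis"
    then obtain u v where u: "u \<in> {a<..<b}" "f u < \<epsilon>" and v: "v \<in> {a<..<b}" "- f v < \<epsilon>"
      by auto
    with assms(2) have "f u \<le> 0" "0 \<le> f v" by fastforce+
    with conn u v have "0 \<in> f ` {a<..<b}"
      unfolding connected_iff_interval by blast
    with assms(2,3) show False by fastforce
  qed
  then show ?thesis
    using that[of 1] that[of "-1"] by auto
qed

lemma deriv_ge_inverse_dist_imp_unbounded_right:
  fixes g g' :: "real \<Rightarrow> real"
  assumes "s < 1" and "0 < k"
    and "\<forall>u\<in>{s..<1}. (g has_real_derivative g' u) (at u) \<and> k / (1 - u) \<le> g' u"
  shows "\<exists>u\<in>{s..<1}. B < g u"
proof -
  define L where "L = \<bar>B - g s\<bar> + 1"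
  define u where "u = 1 - (1 - s) * exp (- (L / k))"
  have "0 < L / k"
    using \<open>0 < k\<close> by (simp add: L_def)
  then have "exp (- (L / k)) < 1"
    by simp
  then have "(1 - s) * exp (- (L / k)) \<le> 1 - s"
    using \<open>s < 1\<close> by (intro mult_left_le) auto
  moreover have "0 < (1 - s) * exp (- (L / k))"
    using \<open>s < 1\<close> by simp
  ultimately have u: "s \<le> u" "u < 1"
    unfolding u_def by linarith+
  have "g s + k * ln (1 - s) \<le> g u + k * ln (1 - u)"
  proof (rule deriv_nonneg_imp_mono[OF _ _ \<open>s \<le> u\<close>])
    fix x assume x: "x \<in> {s..u}"
    then show "((\<lambda>v. g v + k * ln (1 - v)) has_real_derivative g' x - k / (1 - x)) (at x)"
      using assms(3) u by (auto intro!: derivative_eq_intros simp: field_simps)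
    show "0 \<le> g' x - k / (1 - x)"
      using assms(3) x u by auto
  qed
  moreover have "ln (1 - u) = ln (1 - s) - L / k"
    using \<open>s < 1\<close> by (simp add: u_def ln_mult)
  then have "k * ln (1 - u) = k * ln (1 - s) - L"
    using \<open>0 < k\<close> by (simp add: field_simps)
  ultimately have "B < g u"
    unfolding L_def by linarith
  with u show ?thesis by auto
qed

lemma deriv_ge_inverse_dist_imp_unbounded_left:
  fixes g g' :: "real \<Rightarrow> real"
  assumes "-1 < s" and "0 < k"
    and "\<forall>u\<in>{-1<..s}. (g has_real_derivative g' u) (at u) \<and> k / (1 + u) \<le> g' u"
  shows "\<exists>u\<in>{-1<..s}. g u < B"
proof -
  have "\<forall>u\<in>{-s..<1}. ((\<lambda>v. - g (- v)) has_real_derivative g' (- u)) (at u) \<and> k / (1 - u) \<le> g' (- u)"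
  proof
    fix u assume "u \<in> {-s..<1}"
    then have "(g has_real_derivative g' (- u)) (at (- u))" "k / (1 + - u) \<le> g' (- u)"
      using assms(3)[rule_format, of "- u"] by auto
    then show "((\<lambda>v. - g (- v)) has_real_derivative g' (- u)) (at u) \<and> k / (1 - u) \<le> g' (- u)"
      using DERIV_minus DERIV_mirror by fastforce
  qed
  then obtain u where "u \<in> {-s..<1}" "- B < - g (- u)"
    using deriv_ge_inverse_dist_imp_unbounded_right[of "- s" k "\<lambda>v. - g (- v)" "\<lambda>u. g' (- u)" "- B"]
      assms(1,2) by auto
  then show ?thesis
    by (intro bexI[of _ "- u"]) auto
qed

lemma le_if_le_linear_at_left:
  fixes x y K t0 b :: real
  assumes "t0 < b" and "\<And>t. t0 < t \<Longrightarrow> t < b \<Longrightarrow> x \<le> K * (b - t) + y"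
  shows "x \<le> y"
proof (rule tendsto_lowerbound)
  show "((\<lambda>t. K * (b - t) + y) \<longlongrightarrow> y) (at_left b)"
    by (auto intro!: tendsto_eq_intros)
  show "\<forall>\<^sub>F t in at_left b. x \<le> K * (b - t) + y"
    using eventually_at_left_real[OF assms(1)] by eventually_elim (use assms(2) in auto)
qed simp

lemma le_if_le_linear_at_right:
  fixes x y K t0 a :: real
  assumes "a < t0" and "\<And>t. a < t \<Longrightarrow> t < t0 \<Longrightarrow> x \<le> K * (t - a) + y"
  shows "x \<le> y"
proof (rule tendsto_lowerbound)
  show "((\<lambda>t. K * (t - a) + y) \<longlongrightarrow> y) (at_right a)"
    by (auto intro!: tendsto_eq_intros)
  show "\<forall>\<^sub>F t in at_right a. x \<le> K * (t - a) + y"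
    using eventually_at_right_real[OF assms(1)] by eventually_elim (use assms(2) in auto)
qed simp

lemma abs_diff_le_if_abs_deriv_le:
  fixes f g f' g' :: "real \<Rightarrow> real"
  assumes "s \<le> t"
    and "\<And>x. x \<in> {s..t} \<Longrightarrow> (f has_real_derivative f' x) (at x)"
    and "\<And>x. x \<in> {s..t} \<Longrightarrow> (g has_real_derivative g' x) (at x)"
    and "\<And>x. x \<in> {s..t} \<Longrightarrow> \<bar>f' x\<bar> \<le> g' x"
  shows "\<bar>f t - f s\<bar> \<le> g t - g s"
proof -
  have "g s - f s \<le> g t - f t"
    by (rule deriv_nonneg_imp_mono[OF DERIV_diff[OF assms(3,2)] _ assms(1)])
       (use assms(4) in \<open>force simp: abs_le_iff\<close>)+
  moreover have "g s + f s \<le> g t + f t"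
    by (rule deriv_nonneg_imp_mono[OF DERIV_add[OF assms(3,2)] _ assms(1)])
       (use assms(4) in \<open>force simp: abs_le_iff\<close>)+
  ultimately show ?thesis by linarith
qed

locale radial_equation =
  fixes c \<alpha> p M I :: real and \<phi> \<phi>' :: "real \<Rightarrow> real"
  assumes p_gt_1: "1 < p"
    and alpha_gt: "c\<^sup>2 / 4 < \<alpha>"
    and phi_bound: "\<forall>t\<in>{-1..1}. \<bar>\<phi> t\<bar> \<le> M"
    and phi_deriv: "\<forall>t\<in>{-1<..<1}. (\<phi> has_real_derivative \<phi>' t) (at t)"
    and ode: "\<forall>t\<in>{-1<..<1}.
      ((\<lambda>u. (1 - u) * (1 + u) powr p * \<phi>' u) has_real_derivative
         - ((\<alpha> - c\<^sup>2 * (1 + t) / 8) * (1 + t) powr (p - 1) * \<phi> t)) (at t)"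
    and mass: "((\<lambda>t. (1 + t) powr (p - 1) * \<bar>\<phi> t\<bar>\<^sup>2) has_integral I) {-1..1}"
begin

definition "A t = (1 - t) * (1 + t) powr p"
definition "w t = (1 + t) powr (p - 1)"
definition "q t = \<alpha> - c\<^sup>2 * (1 + t) / 8"
definition "P t = A t * \<phi>' t"
definition "Y t = integral {-1..t} (\<lambda>u. w u * (\<phi> u)\<^sup>2)"

definition "qw' t = w t * ((p - 1) * q t - (1 + t) * c\<^sup>2 / 8) / (1 + t)"

definition "energy t = A t * (\<phi> t)\<^sup>2 + (P t)\<^sup>2 / (q t * w t)"
definition "weighted_energy t = A t * w t * (\<phi> t)\<^sup>2 + (P t)\<^sup>2 / q t"

lemma w_pos: "-1 < t \<Longrightarrow> 0 < w t"
  unfolding w_def by simp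

lemma w_le: "-1 < t \<Longrightarrow> t \<le> 1 \<Longrightarrow> w t \<le> 2 powr (p - 1)"
  unfolding w_def using p_gt_1 by (intro powr_mono2) auto

lemma w_ge_1: "0 \<le> t \<Longrightarrow> 1 \<le> w t"
  unfolding w_def using p_gt_1 by (simp add: ge_one_powr_ge_zero)

lemma one_plus_powr_p: "-1 < t \<Longrightarrow> (1 + t) powr p = (1 + t) * w t"
  unfolding w_def by (simp add: powr_diff)

lemma A_eq: "-1 < t \<Longrightarrow> A t = (1 - t) * (1 + t) * w t"
  unfolding A_def by (simp add: one_plus_powr_p)

lemma A_pos: "-1 < t \<Longrightarrow> t < 1 \<Longrightarrow> 0 < A t"
  unfolding A_def by simp

lemma A_le_right: "0 \<le> t \<Longrightarrow> t < 1 \<Longrightarrow> A t \<le> 2 powr p * (1 - t)"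
proof -
  assume t: "0 \<le> t" "t < 1"
  then have "(1 + t) powr p \<le> 2 powr p"
    using p_gt_1 by (intro powr_mono2) auto
  with t show ?thesis
    unfolding A_def by (simp add: mult.commute mult_left_mono)
qed

lemma A_le_left: "-1 < t \<Longrightarrow> t \<le> 0 \<Longrightarrow> A t \<le> 2 * (1 + t)"
proof -
  assume t: "-1 < t" "t \<le> 0"
  have "(1 + t) powr p \<le> (1 + t) powr 1"
    using t p_gt_1 by (intro powr_mono') auto
  with t show ?thesis
    unfolding A_def by (intro mult_mono) auto
qed

lemma gap_pos: "0 < \<alpha> - c\<^sup>2 / 4"
  using alpha_gt by simp

lemma alpha_pos: "0 < \<alpha>"
  using alpha_gt zero_le_power2[of c] by linarith

lemma q_ge: "t \<le> 1 \<Longrightarrow> \<alpha> - c\<^sup>2 / 4 \<le> q t"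
proof -
  assume "t \<le> 1"
  then have "(1 + t) * c\<^sup>2 \<le> 2 * c\<^sup>2"
    by (intro mult_right_mono) auto
  then show ?thesis
    unfolding q_def by simp
qed

lemma q_pos: "t \<le> 1 \<Longrightarrow> 0 < q t"
  using q_ge gap_pos by fastforce

lemma q_le_alpha: "-1 \<le> t \<Longrightarrow> q t \<le> \<alpha>"
  unfolding q_def by simp

lemma q_antimono: "s \<le> t \<Longrightarrow> q t \<le> q s"
  unfolding q_def by (simp add: mult_left_mono)

lemma M_nonneg: "0 \<le> M"
  using phi_bound by force

lemma phi_sq_le: "-1 \<le> t \<Longrightarrow> t \<le> 1 \<Longrightarrow> (\<phi> t)\<^sup>2 \<le> M\<^sup>2"
  using phi_bound by (simp add: abs_le_square_iff[symmetric] M_nonneg)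

lemma phi_has_deriv: "-1 < t \<Longrightarrow> t < 1 \<Longrightarrow> (\<phi> has_real_derivative \<phi>' t) (at t)"
  using phi_deriv by auto

lemma P_has_deriv: "-1 < t \<Longrightarrow> t < 1 \<Longrightarrow> (P has_real_derivative - (q t * w t * \<phi> t)) (at t)"
  using ode unfolding P_def[abs_def] A_def q_def w_def by auto

lemma A_has_deriv: "-1 < t \<Longrightarrow> (A has_real_derivative w t * (p - 1 - (p + 1) * t)) (at t)"
proof -
  assume t: "-1 < t"
  have "(A has_real_derivative - ((1 + t) powr p) + (1 - t) * (p * (1 + t) powr (p - 1))) (at t)"
    unfolding A_def[abs_def] using t by (auto intro!: derivative_eq_intros)
  then show ?thesis
    using t by (simp add: one_plus_powr_p w_def[symmetric] algebra_simps)
qed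

lemma w_has_deriv: "-1 < t \<Longrightarrow> (w has_real_derivative (p - 1) * w t / (1 + t)) (at t)"
proof -
  assume t: "-1 < t"
  have "(w has_real_derivative (p - 1) * (1 + t) powr (p - 1 - 1)) (at t)"
    unfolding w_def[abs_def] using t by (auto intro!: derivative_eq_intros)
  then show ?thesis
    using t by (simp add: w_def powr_diff power2_eq_square)
qed

lemma qw_has_deriv: "-1 < t \<Longrightarrow> ((\<lambda>u. q u * w u) has_real_derivative qw' t) (at t)"
proof -
  assume t: "-1 < t"
  have "((\<lambda>u. q u * w u) has_real_derivative - (c\<^sup>2 / 8) * w t + q t * ((p - 1) * w t / (1 + t))) (at t)"
    unfolding q_def[abs_def] using t by (auto intro!: derivative_eq_intros w_has_deriv)
  then show ?thesis
    using t by (simp add: qw'_def field_simps)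
qed

lemma phi_sq_integrable: "((\<lambda>t. w t * (\<phi> t)\<^sup>2) has_integral I) {-1..1}"
  using mass by (simp add: w_def)

lemma phi_sq_integrable_on: "-1 \<le> t \<Longrightarrow> t \<le> 1 \<Longrightarrow> (\<lambda>u. w u * (\<phi> u)\<^sup>2) integrable_on {-1..t}"
  by (rule integrable_subinterval_real[OF has_integral_integrable[OF phi_sq_integrable]]) simp

lemma Y_nonneg: "-1 \<le> t \<Longrightarrow> t \<le> 1 \<Longrightarrow> 0 \<le> Y t"
  unfolding Y_def by (rule integral_nonneg[OF phi_sq_integrable_on]) (simp_all add: w_def)

lemma Y_le: "-1 \<le> t \<Longrightarrow> t \<le> 1 \<Longrightarrow> Y t \<le> I"
  unfolding Y_def integral_unique[OF phi_sq_integrable, symmetric]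
  by (rule integral_subset_le[OF _ phi_sq_integrable_on phi_sq_integrable_on]) (simp_all add: w_def)

lemma Y_has_deriv: "-1 < t \<Longrightarrow> t < 1 \<Longrightarrow> (Y has_real_derivative w t * (\<phi> t)\<^sup>2) (at t)"
proof -
  assume t: "-1 < t" "t < 1"
  have "isCont (\<lambda>u. w u * (\<phi> u)\<^sup>2) t"
    unfolding w_def using t DERIV_isCont[OF phi_has_deriv[OF t]]
    by (intro continuous_intros) auto
  then have "(Y has_vector_derivative w t * (\<phi> t)\<^sup>2) (at t within {-1..1} - {})"
    unfolding Y_def[abs_def] using phi_sq_integrable t
    by (intro integral_has_vector_derivative_continuous_at)
       (auto intro: continuous_at_imp_continuous_within)
  moreover have "at t within {-1..1} - {} = at t"
    using t by (intro at_within_interior) auto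
  ultimately show ?thesis
    by (simp add: has_real_derivative_iff_has_vector_derivative)
qed

lemma phi'_eq: "-1 < t \<Longrightarrow> t < 1 \<Longrightarrow> \<phi>' t = P t / A t"
  using A_pos[of t] by (simp add: P_def)

lemma P_isCont: "-1 < t \<Longrightarrow> t < 1 \<Longrightarrow> isCont P t"
  using P_has_deriv DERIV_isCont by blast

lemma abs_phi_le: "-1 \<le> t \<Longrightarrow> t \<le> 1 \<Longrightarrow> \<bar>\<sigma>\<bar> = 1 \<Longrightarrow> \<bar>\<sigma> * \<phi> t\<bar> \<le> M"
  using phi_bound by (simp add: abs_mult)

text \<open>If \<bar>P\<bar> stayed above \<epsilon> near an endpoint, P would keep one sign there, and \<phi>' = P / A
  would be bounded below (up to that sign) by a multiple of 1/(1 - t), resp. 1/(1 + t),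
  forcing the bounded \<phi> to grow logarithmically.\<close>

lemma P_small_near_right:
  assumes "0 \<le> t0" "t0 < 1" "0 < \<epsilon>"
  shows "\<exists>s\<in>{t0<..<1}. \<bar>P s\<bar> < \<epsilon>"
proof (rule ccontr)
  assume "\<not> ?thesis"
  then have "\<forall>u\<in>{t0<..<1}. \<epsilon> \<le> \<bar>P u\<bar>"
    by (auto simp: not_less)
  moreover have "\<forall>u\<in>{t0<..<1}. isCont P u"
    using P_isCont assms by auto
  ultimately obtain \<sigma> where \<sigma>: "\<bar>\<sigma>\<bar> = 1" "\<forall>u\<in>{t0<..<1}. \<epsilon> \<le> \<sigma> * P u"
    using continuous_abs_ge_imp_sign_constant \<open>0 < \<epsilon>\<close> by blast
  define s where "s = (t0 + 1) / 2"
  have s: "t0 < s" "s < 1"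
    using assms by (auto simp: s_def)
  have deriv: "\<forall>u\<in>{s..<1}. ((\<lambda>v. \<sigma> * \<phi> v) has_real_derivative \<sigma> * \<phi>' u) (at u)
      \<and> \<epsilon> / 2 powr p / (1 - u) \<le> \<sigma> * \<phi>' u"
  proof
    fix u assume "u \<in> {s..<1}"
    then have u: "-1 < u" "u < 1" "t0 < u"
      using s assms by auto
    have "\<epsilon> / 2 powr p / (1 - u) = \<epsilon> / (2 powr p * (1 - u))"
      by simp
    also have "\<dots> \<le> \<sigma> * P u / A u"
      using \<sigma>(2) u A_pos[of u] A_le_right[of u] assms
      by (intro frac_le) (auto intro: order_trans[of 0 \<epsilon>, OF less_imp_le])
    also have "\<dots> = \<sigma> * \<phi>' u"
      using u by (simp add: phi'_eq)
    finally show "((\<lambda>v. \<sigma> * \<phi> v) has_real_derivative \<sigma> * \<phi>' u) (at u)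
      \<and> \<epsilon> / 2 powr p / (1 - u) \<le> \<sigma> * \<phi>' u"
      using DERIV_cmult[OF phi_has_deriv[OF u(1,2)]] by simp
  qed
  have "0 < \<epsilon> / 2 powr p"
    using assms by simp
  then obtain u where "u \<in> {s..<1}" "M < \<sigma> * \<phi> u"
    using deriv_ge_inverse_dist_imp_unbounded_right[OF \<open>s < 1\<close> _ deriv] by blast
  with abs_phi_le[of u, OF _ _ \<sigma>(1)] s assms show False
    by auto
qed

lemma P_small_near_left:
  assumes "-1 < t0" "t0 \<le> 0" "0 < \<epsilon>"
  shows "\<exists>s\<in>{-1<..<t0}. \<bar>P s\<bar> < \<epsilon>"
proof (rule ccontr)
  assume "\<not> ?thesis"
  then have "\<forall>u\<in>{-1<..<t0}. \<epsilon> \<le> \<bar>P u\<bar>"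
    by (auto simp: not_less)
  moreover have "\<forall>u\<in>{-1<..<t0}. isCont P u"
    using P_isCont assms by auto
  ultimately obtain \<sigma> where \<sigma>: "\<bar>\<sigma>\<bar> = 1" "\<forall>u\<in>{-1<..<t0}. \<epsilon> \<le> \<sigma> * P u"
    using continuous_abs_ge_imp_sign_constant \<open>0 < \<epsilon>\<close> by blast
  define s where "s = (t0 - 1) / 2"
  have s: "-1 < s" "s < t0"
    using assms by (auto simp: s_def)
  have deriv: "\<forall>u\<in>{-1<..s}. ((\<lambda>v. \<sigma> * \<phi> v) has_real_derivative \<sigma> * \<phi>' u) (at u)
      \<and> \<epsilon> / 2 / (1 + u) \<le> \<sigma> * \<phi>' u"
  proof
    fix u assume "u \<in> {-1<..s}"
    then have u: "-1 < u" "u < 1" "u < t0"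
      using s assms by auto
    have "\<epsilon> / 2 / (1 + u) = \<epsilon> / (2 * (1 + u))"
      by simp
    also have "\<dots> \<le> \<sigma> * P u / A u"
      using \<sigma>(2) u A_pos[of u] A_le_left[of u] assms
      by (intro frac_le) (auto intro: order_trans[of 0 \<epsilon>, OF less_imp_le])
    also have "\<dots> = \<sigma> * \<phi>' u"
      using u by (simp add: phi'_eq)
    finally show "((\<lambda>v. \<sigma> * \<phi> v) has_real_derivative \<sigma> * \<phi>' u) (at u)
      \<and> \<epsilon> / 2 / (1 + u) \<le> \<sigma> * \<phi>' u"
      using DERIV_cmult[OF phi_has_deriv[OF u(1,2)]] by simp
  qed
  have "0 < \<epsilon> / 2"
    using assms by simp
  then obtain u where "u \<in> {-1<..s}" "\<sigma> * \<phi> u < - M"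
    using deriv_ge_inverse_dist_imp_unbounded_left[OF \<open>-1 < s\<close> _ deriv] by blast
  with abs_phi_le[of u, OF _ _ \<sigma>(1)] s assms show False
    by auto
qed

lemma P_deriv_abs_le: "-1 < t \<Longrightarrow> t < 1 \<Longrightarrow> \<bar>- (q t * w t * \<phi> t)\<bar> \<le> \<alpha> * M * w t"
proof -
  assume t: "-1 < t" "t < 1"
  then have "\<bar>- (q t * w t * \<phi> t)\<bar> = q t * w t * \<bar>\<phi> t\<bar>"
    using q_pos[of t] w_pos[of t] by (simp add: abs_mult)
  also have "\<dots> \<le> \<alpha> * w t * M"
    using t q_pos[of t] w_pos[of t] q_le_alpha[of t] phi_bound by (intro mult_mono) auto
  finally show ?thesis
    by (simp add: algebra_simps)
qed

lemma P_le_right: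
  obtains C where "\<And>t. 0 \<le> t \<Longrightarrow> t < 1 \<Longrightarrow> \<bar>P t\<bar> \<le> C * (1 - t)"
proof -
  define C where "C = \<alpha> * M * 2 powr (p - 1)"
  have "\<bar>P t\<bar> \<le> C * (1 - t)" if t: "0 \<le> t" "t < 1" for t
  proof (rule field_le_epsilon)
    fix \<epsilon> :: real assume "0 < \<epsilon>"
    then obtain s where s: "t < s" "s < 1" "\<bar>P s\<bar> < \<epsilon>"
      using P_small_near_right[OF t] by (meson greaterThanLessThan_iff)
    have "\<bar>P s - P t\<bar> \<le> C * s - C * t"
    proof (rule abs_diff_le_if_abs_deriv_le[where f' = "\<lambda>x. - (q x * w x * \<phi> x)" and g' = "\<lambda>_. C"])
      fix x assume "x \<in> {t..s}"
      then have x: "-1 < x" "x < 1" "0 \<le> x"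
        using s t by auto
      show "(P has_real_derivative - (q x * w x * \<phi> x)) (at x)"
        using P_has_deriv[OF x(1,2)] .
      show "((\<lambda>x. C * x) has_real_derivative C) (at x)"
        using DERIV_cmult_Id[of C] by simp
      have "\<alpha> * M * w x \<le> C"
        unfolding C_def using x w_le[of x] alpha_pos M_nonneg by (intro mult_left_mono) auto
      then show "\<bar>- (q x * w x * \<phi> x)\<bar> \<le> C"
        using P_deriv_abs_le[OF x(1,2)] by linarith
    qed (use s in auto)
    moreover have "C * s \<le> C * 1"
      unfolding C_def using s alpha_pos M_nonneg by (intro mult_left_mono) auto
    ultimately show "\<bar>P t\<bar> \<le> C * (1 - t) + \<epsilon>"
      using s by (simp add: algebra_simps abs_le_iff)
  qed
  then show ?thesis
    by (rule that)
qed

lemma P_le_left: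
  obtains C where "\<And>t. -1 < t \<Longrightarrow> t \<le> 0 \<Longrightarrow> \<bar>P t\<bar> \<le> C * (1 + t) powr p"
proof -
  define C where "C = \<alpha> * M / p"
  have "\<bar>P t\<bar> \<le> C * (1 + t) powr p" if t: "-1 < t" "t \<le> 0" for t
  proof (rule field_le_epsilon)
    fix \<epsilon> :: real assume "0 < \<epsilon>"
    then obtain s where s: "-1 < s" "s < t" "\<bar>P s\<bar> < \<epsilon>"
      using P_small_near_left[OF t] by (meson greaterThanLessThan_iff)
    have "\<bar>P t - P s\<bar> \<le> C * (1 + t) powr p - C * (1 + s) powr p"
    proof (rule abs_diff_le_if_abs_deriv_le[where f' = "\<lambda>x. - (q x * w x * \<phi> x)"
          and g' = "\<lambda>x. \<alpha> * M * w x"])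
      fix x assume "x \<in> {s..t}"
      then have x: "-1 < x" "x < 1"
        using s t by auto
      show "(P has_real_derivative - (q x * w x * \<phi> x)) (at x)"
        using P_has_deriv[OF x] .
      have "((\<lambda>x. C * (1 + x) powr p) has_real_derivative C * (p * (1 + x) powr (p - 1))) (at x)"
        using x by (auto intro!: derivative_eq_intros)
      then show "((\<lambda>x. C * (1 + x) powr p) has_real_derivative \<alpha> * M * w x) (at x)"
        using p_gt_1 by (simp add: C_def w_def mult.assoc)
      show "\<bar>- (q x * w x * \<phi> x)\<bar> \<le> \<alpha> * M * w x"
        using P_deriv_abs_le[OF x] .
    qed (use s in auto)
    moreover have "0 \<le> C * (1 + s) powr p"
      unfolding C_def using alpha_pos M_nonneg p_gt_1 by simp
    ultimately show "\<bar>P t\<bar> \<le> C * (1 + t) powr p + \<epsilon>"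
      using s by linarith
  qed
  then show ?thesis
    by (rule that)
qed

lemma P_sq_le_right:
  obtains C where "\<And>t. 0 \<le> t \<Longrightarrow> t < 1 \<Longrightarrow> (P t)\<^sup>2 \<le> C * (1 - t)"
proof -
  obtain C where C: "\<And>t. 0 \<le> t \<Longrightarrow> t < 1 \<Longrightarrow> \<bar>P t\<bar> \<le> C * (1 - t)"
    using P_le_right by blast
  have "(P t)\<^sup>2 \<le> C\<^sup>2 * (1 - t)" if t: "0 \<le> t" "t < 1" for t
  proof -
    have "(P t)\<^sup>2 \<le> (C * (1 - t))\<^sup>2"
      using C[OF t] by (simp add: abs_le_square_iff[symmetric])
    also have "\<dots> = C\<^sup>2 * (1 - t) * (1 - t)"
      by (simp add: power2_eq_square algebra_simps)
    also have "\<dots> \<le> C\<^sup>2 * (1 - t) * 1"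
      using t by (intro mult_left_mono) auto
    finally show ?thesis
      by simp
  qed
  then show ?thesis
    by (rule that)
qed

lemma P_sq_le_left:
  obtains C where "\<And>t. -1 < t \<Longrightarrow> t \<le> 0 \<Longrightarrow> (P t)\<^sup>2 \<le> C * (1 + t) * w t"
proof -
  obtain C where C: "\<And>t. -1 < t \<Longrightarrow> t \<le> 0 \<Longrightarrow> \<bar>P t\<bar> \<le> C * (1 + t) powr p"
    using P_le_left by blast
  have "(P t)\<^sup>2 \<le> C\<^sup>2 * (1 + t) * w t" if t: "-1 < t" "t \<le> 0" for t
  proof -
    have small: "(1 + t) * w t \<le> 1"
      using t p_gt_1 powr_le1[of p "1 + t"] by (simp add: one_plus_powr_p)
    have "(P t)\<^sup>2 \<le> (C * ((1 + t) * w t))\<^sup>2"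
      using C[OF t] t by (simp add: abs_le_square_iff[symmetric] one_plus_powr_p)
    also have "\<dots> = C\<^sup>2 * (1 + t) * w t * ((1 + t) * w t)"
      by (simp add: power2_eq_square algebra_simps)
    also have "\<dots> \<le> C\<^sup>2 * (1 + t) * w t * 1"
      using t small w_pos[of t] by (intro mult_left_mono) auto
    finally show ?thesis
      by simp
  qed
  then show ?thesis
    by (rule that)
qed

lemma A_phi_sq_le_right: "0 \<le> t \<Longrightarrow> t < 1 \<Longrightarrow> A t * (\<phi> t)\<^sup>2 \<le> 2 powr p * M\<^sup>2 * (1 - t)"
proof -
  assume t: "0 \<le> t" "t < 1"
  then have "A t * (\<phi> t)\<^sup>2 \<le> (2 powr p * (1 - t)) * M\<^sup>2"
    using A_le_right[OF t] phi_sq_le[of t] A_pos[of t] by (intro mult_mono) auto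
  then show ?thesis
    by (simp add: algebra_simps)
qed

lemma A_phi_sq_le_left: "-1 < t \<Longrightarrow> t \<le> 0 \<Longrightarrow> A t * (\<phi> t)\<^sup>2 \<le> 2 * M\<^sup>2 * (1 + t)"
proof -
  assume t: "-1 < t" "t \<le> 0"
  then have "A t * (\<phi> t)\<^sup>2 \<le> (2 * (1 + t)) * M\<^sup>2"
    using A_le_left[OF t] phi_sq_le[of t] A_pos[of t] by (intro mult_mono) auto
  then show ?thesis
    by (simp add: algebra_simps)
qed

lemma energy_le_right:
  obtains K where "\<And>t. 0 \<le> t \<Longrightarrow> t < 1 \<Longrightarrow> energy t \<le> K * (1 - t)"
proof -
  obtain C where C: "\<And>t. 0 \<le> t \<Longrightarrow> t < 1 \<Longrightarrow> (P t)\<^sup>2 \<le> C * (1 - t)"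
    using P_sq_le_right by blast
  have "energy t \<le> (2 powr p * M\<^sup>2 + C / (\<alpha> - c\<^sup>2 / 4)) * (1 - t)" if t: "0 \<le> t" "t < 1" for t
  proof -
    have "q t \<le> q t * w t"
      using t q_pos[of t] w_ge_1[of t] by simp
    with q_ge[of t] t have "\<alpha> - c\<^sup>2 / 4 \<le> q t * w t"
      by linarith
    then have "(P t)\<^sup>2 / (q t * w t) \<le> C * (1 - t) / (\<alpha> - c\<^sup>2 / 4)"
      using C[OF t] t q_ge[of t] gap_pos by (intro frac_le) (auto intro: order_trans[OF zero_le_power2])
    then show ?thesis
      using A_phi_sq_le_right[OF t] unfolding energy_def by (simp add: algebra_simps)
  qed
  then show ?thesis
    by (rule that)
qed

lemma energy_le_left:
  obtains K where "\<And>t. -1 < t \<Longrightarrow> t \<le> 0 \<Longrightarrow> energy t \<le> K * (1 + t)"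
proof -
  obtain C where C: "\<And>t. -1 < t \<Longrightarrow> t \<le> 0 \<Longrightarrow> (P t)\<^sup>2 \<le> C * (1 + t) * w t"
    using P_sq_le_left by blast
  have "energy t \<le> (2 * M\<^sup>2 + C / (\<alpha> - c\<^sup>2 / 4)) * (1 + t)" if t: "-1 < t" "t \<le> 0" for t
  proof -
    have "(\<alpha> - c\<^sup>2 / 4) * w t \<le> q t * w t"
      using t q_ge[of t] w_pos[of t] by (intro mult_right_mono) auto
    then have "(P t)\<^sup>2 / (q t * w t) \<le> C * (1 + t) * w t / ((\<alpha> - c\<^sup>2 / 4) * w t)"
      using C[OF t] t gap_pos w_pos[of t]
      by (intro frac_le) (auto intro: order_trans[OF zero_le_power2])
    also have "\<dots> = C / (\<alpha> - c\<^sup>2 / 4) * (1 + t)"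
      using w_pos[of t] t by simp
    finally show ?thesis
      using A_phi_sq_le_left[OF t] unfolding energy_def by (simp add: algebra_simps)
  qed
  then show ?thesis
    by (rule that)
qed

lemma weighted_energy_le_right:
  obtains K where "\<And>t. 0 \<le> t \<Longrightarrow> t < 1 \<Longrightarrow> weighted_energy t \<le> K * (1 - t)"
proof -
  obtain C where C: "\<And>t. 0 \<le> t \<Longrightarrow> t < 1 \<Longrightarrow> (P t)\<^sup>2 \<le> C * (1 - t)"
    using P_sq_le_right by blast
  have "weighted_energy t \<le> (2 powr p * M\<^sup>2 * 2 powr (p - 1) + C / (\<alpha> - c\<^sup>2 / 4)) * (1 - t)"
    if t: "0 \<le> t" "t < 1" for t
  proof -
    have "A t * (\<phi> t)\<^sup>2 * w t \<le> 2 powr p * M\<^sup>2 * (1 - t) * 2 powr (p - 1)"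
      using t w_pos[of t] by (intro mult_mono[OF A_phi_sq_le_right[OF t] w_le]) auto
    moreover have "(P t)\<^sup>2 / q t \<le> C * (1 - t) / (\<alpha> - c\<^sup>2 / 4)"
      using C[OF t] t q_ge[of t] gap_pos by (intro frac_le) (auto intro: order_trans[OF zero_le_power2])
    ultimately show ?thesis
      unfolding weighted_energy_def by (simp add: algebra_simps)
  qed
  then show ?thesis
    by (rule that)
qed

lemma energy_has_deriv:
  assumes "-1 < t" "t < 1"
  shows "(energy has_real_derivative
      w t * (p - 1 - (p + 1) * t) * (\<phi> t)\<^sup>2 - qw' t / (q t * w t)\<^sup>2 * (P t)\<^sup>2) (at t)"
proof -
  have qw: "q t * w t \<noteq> 0"
    using assms q_pos[of t] w_pos[of t] by simp
  have "((\<lambda>u. inverse (q u * w u)) has_real_derivative - (qw' t * inverse ((q t * w t)\<^sup>2))) (at t)"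
    using DERIV_inverse_fun[OF qw_has_deriv[OF assms(1)] qw] by (simp add: power2_eq_square)
  moreover have "A t = inverse (q t * w t) * A t * (q t * w t)"
    using qw by (simp add: field_simps)
  ultimately have "((\<lambda>u. A u * (\<phi> u)\<^sup>2 + inverse (q u * w u) * (P u)\<^sup>2) has_real_derivative
      w t * (p - 1 - (p + 1) * t) * (\<phi> t)\<^sup>2 + - (qw' t * inverse ((q t * w t)\<^sup>2)) * (P t)\<^sup>2) (at t)"
    by (rule energy_has_real_derivative[OF phi_has_deriv[OF assms] P_has_deriv[OF assms] P_def
          A_has_deriv[OF assms(1)]])
  moreover have "(\<lambda>u. A u * (\<phi> u)\<^sup>2 + inverse (q u * w u) * (P u)\<^sup>2) = energy"
    by (rule ext) (simp add: energy_def inverse_eq_divide)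
  ultimately show ?thesis
    by (simp add: inverse_eq_divide)
qed

lemma weighted_energy_has_deriv:
  assumes "-1 < t" "t < 1"
  shows "(weighted_energy has_real_derivative
      w t * w t * (2 * p * (1 - t) - 2) * (\<phi> t)\<^sup>2 + c\<^sup>2 / 8 / (q t)\<^sup>2 * (P t)\<^sup>2) (at t)"
proof -
  have q: "q t \<noteq> 0"
    using assms q_pos[of t] by simp
  have "(q has_real_derivative - (c\<^sup>2 / 8)) (at t)"
    unfolding q_def[abs_def] by (auto intro!: derivative_eq_intros)
  from DERIV_inverse_fun[OF this q]
  have inv: "((\<lambda>u. inverse (q u)) has_real_derivative c\<^sup>2 / 8 * inverse ((q t)\<^sup>2)) (at t)"
    by (simp add: power2_eq_square)
  have "((\<lambda>u. A u * w u) has_real_derivative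
      w t * (p - 1 - (p + 1) * t) * w t + (p - 1) * w t / (1 + t) * A t) (at t)"
    by (rule DERIV_mult[OF A_has_deriv[OF assms(1)] w_has_deriv[OF assms(1)]])
  moreover have "(p - 1) * w t / (1 + t) * A t = (p - 1) * (1 - t) * w t * w t"
    using assms by (simp add: A_eq)
  then have "w t * (p - 1 - (p + 1) * t) * w t + (p - 1) * w t / (1 + t) * A t
      = w t * w t * (2 * p * (1 - t) - 2)"
    by (simp add: algebra_simps)
  ultimately have "((\<lambda>u. A u * w u) has_real_derivative w t * w t * (2 * p * (1 - t) - 2)) (at t)"
    by (rule DERIV_cong)
  moreover have "inverse (q t) * A t * (q t * w t) = (inverse (q t) * q t) * (A t * w t)"
    by (simp only: ac_simps)
  then have "A t * w t = inverse (q t) * A t * (q t * w t)"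
    using q by simp
  ultimately have "((\<lambda>u. A u * w u * (\<phi> u)\<^sup>2 + inverse (q u) * (P u)\<^sup>2) has_real_derivative
      w t * w t * (2 * p * (1 - t) - 2) * (\<phi> t)\<^sup>2 + c\<^sup>2 / 8 * inverse ((q t)\<^sup>2) * (P t)\<^sup>2) (at t)"
    by (rule energy_has_real_derivative[OF phi_has_deriv[OF assms] P_has_deriv[OF assms] P_def _ inv])
  moreover have "(\<lambda>u. A u * w u * (\<phi> u)\<^sup>2 + inverse (q u) * (P u)\<^sup>2) = weighted_energy"
    by (rule ext) (simp add: weighted_energy_def inverse_eq_divide)
  ultimately show ?thesis
    by (simp add: inverse_eq_divide)
qed

lemma A_phi_sq_le_energy: "-1 < t \<Longrightarrow> t \<le> 1 \<Longrightarrow> A t * (\<phi> t)\<^sup>2 \<le> energy t"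
  unfolding energy_def using q_pos[of t] w_pos[of t] by simp

lemma A_w_phi_sq_le_weighted_energy: "t \<le> 1 \<Longrightarrow> A t * w t * (\<phi> t)\<^sup>2 \<le> weighted_energy t"
  unfolding weighted_energy_def using q_pos[of t] by simp

lemma qw'_nonpos:
  assumes "-1 < \<eta>" "\<eta> \<le> x" and "(p - 1) * q \<eta> \<le> (1 + \<eta>) * c\<^sup>2 / 8"
  shows "qw' x \<le> 0"
proof -
  have "(p - 1) * q x \<le> (p - 1) * q \<eta>"
    using q_antimono[OF assms(2)] p_gt_1 by (intro mult_left_mono) auto
  also note assms(3)
  also have "(1 + \<eta>) * c\<^sup>2 / 8 \<le> (1 + x) * c\<^sup>2 / 8"
    using assms(2) by (intro divide_right_mono mult_right_mono) auto
  finally show ?thesis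
    unfolding qw'_def using assms w_pos[of x]
    by (intro divide_nonpos_pos mult_nonneg_nonpos) auto
qed

lemma qw'_nonneg:
  assumes "-1 < x" "x \<le> \<eta>" and "(1 + \<eta>) * c\<^sup>2 / 8 \<le> (p - 1) * q \<eta>"
  shows "0 \<le> qw' x"
proof -
  have "(1 + x) * c\<^sup>2 / 8 \<le> (1 + \<eta>) * c\<^sup>2 / 8"
    using assms(2) by (intro divide_right_mono mult_right_mono) auto
  also note assms(3)
  also have "(p - 1) * q \<eta> \<le> (p - 1) * q x"
    using q_antimono[OF assms(2)] p_gt_1 by (intro mult_left_mono) auto
  finally show ?thesis
    unfolding qw'_def using assms w_pos[of x] by simp
qed

lemma A_phi_sq_le_upper_mass:
  assumes "-1 < \<eta>" "\<eta> < 1" and "(p - 1) * q \<eta> \<le> (1 + \<eta>) * c\<^sup>2 / 8"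
  shows "A \<eta> * (\<phi> \<eta>)\<^sup>2 \<le> 2 * (I - Y \<eta>)"
proof -
  have mono: "energy \<eta> + 2 * Y \<eta> \<le> energy t + 2 * Y t" if "\<eta> \<le> t" "t < 1" for t
  proof (rule deriv_nonneg_imp_mono[OF _ _ \<open>\<eta> \<le> t\<close>])
    fix x assume "x \<in> {\<eta>..t}"
    then have x: "-1 < x" "x < 1" "\<eta> \<le> x"
      using assms that by auto
    show "((\<lambda>u. energy u + 2 * Y u) has_real_derivative
        w x * (p - 1 - (p + 1) * x) * (\<phi> x)\<^sup>2 - qw' x / (q x * w x)\<^sup>2 * (P x)\<^sup>2
          + 2 * (w x * (\<phi> x)\<^sup>2)) (at x)"
      using x by (intro DERIV_add DERIV_cmult energy_has_deriv Y_has_deriv)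
    have "0 \<le> - qw' x / (q x * w x)\<^sup>2 * (P x)\<^sup>2"
      using qw'_nonpos[OF assms(1) x(3) assms(3)] by (intro mult_nonneg_nonneg divide_nonneg_nonneg) auto
    moreover have "0 \<le> w x * ((p + 1) * (1 - x)) * (\<phi> x)\<^sup>2"
      using x w_pos[of x] p_gt_1 by simp
    ultimately show "0 \<le> w x * (p - 1 - (p + 1) * x) * (\<phi> x)\<^sup>2 - qw' x / (q x * w x)\<^sup>2 * (P x)\<^sup>2
          + 2 * (w x * (\<phi> x)\<^sup>2)"
      by (simp add: algebra_simps)
  qed
  obtain K where K: "\<And>t. 0 \<le> t \<Longrightarrow> t < 1 \<Longrightarrow> energy t \<le> K * (1 - t)"
    using energy_le_right by blast
  have "energy \<eta> + 2 * Y \<eta> \<le> 2 * I"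
  proof (rule le_if_le_linear_at_left[of "max \<eta> 0" 1 _ K])
    fix t assume "max \<eta> 0 < t" "t < 1"
    then show "energy \<eta> + 2 * Y \<eta> \<le> K * (1 - t) + 2 * I"
      using mono[of t] K[of t] Y_le[of t] by auto
  qed (use assms in auto)
  then show ?thesis
    using A_phi_sq_le_energy[of \<eta>] assms by auto
qed

lemma A_phi_sq_le_lower_mass:
  assumes "-1 < \<eta>" "\<eta> < 1" and "(1 + \<eta>) * c\<^sup>2 / 8 \<le> (p - 1) * q \<eta>"
  shows "A \<eta> * (\<phi> \<eta>)\<^sup>2 \<le> 2 * p * Y \<eta>"
proof -
  have mono: "2 * p * Y t - energy t \<le> 2 * p * Y \<eta> - energy \<eta>" if "-1 < t" "t \<le> \<eta>" for t
  proof (rule deriv_nonneg_imp_mono[OF _ _ \<open>t \<le> \<eta>\<close>])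
    fix x assume "x \<in> {t..\<eta>}"
    then have x: "-1 < x" "x < 1" "x \<le> \<eta>"
      using assms that by auto
    show "((\<lambda>u. 2 * p * Y u - energy u) has_real_derivative
        2 * p * (w x * (\<phi> x)\<^sup>2)
          - (w x * (p - 1 - (p + 1) * x) * (\<phi> x)\<^sup>2 - qw' x / (q x * w x)\<^sup>2 * (P x)\<^sup>2)) (at x)"
      using x by (intro DERIV_diff DERIV_cmult energy_has_deriv Y_has_deriv)
    have "0 \<le> qw' x / (q x * w x)\<^sup>2 * (P x)\<^sup>2"
      using qw'_nonneg[OF x(1,3) assms(3)] by simp
    moreover have "0 \<le> w x * ((p + 1) * (1 + x)) * (\<phi> x)\<^sup>2"
      using x w_pos[of x] p_gt_1 by simp
    ultimately show "0 \<le> 2 * p * (w x * (\<phi> x)\<^sup>2)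
          - (w x * (p - 1 - (p + 1) * x) * (\<phi> x)\<^sup>2 - qw' x / (q x * w x)\<^sup>2 * (P x)\<^sup>2)"
      by (simp add: algebra_simps)
  qed
  obtain K where K: "\<And>t. -1 < t \<Longrightarrow> t \<le> 0 \<Longrightarrow> energy t \<le> K * (1 + t)"
    using energy_le_left by blast
  have "energy \<eta> \<le> 2 * p * Y \<eta>"
  proof (rule le_if_le_linear_at_right[of "-1" "min \<eta> 0" _ K])
    fix t assume t: "-1 < t" "t < min \<eta> 0"
    then have "0 \<le> 2 * p * Y t"
      using Y_nonneg[of t] p_gt_1 assms by simp
    moreover have "energy t \<le> K * (t - -1)"
      using K[of t] t by (simp add: add.commute)
    ultimately show "energy \<eta> \<le> K * (t - -1) + 2 * p * Y \<eta>"
      using mono[of t] t by linarith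
  qed (use assms in auto)
  then show ?thesis
    using A_phi_sq_le_energy[of \<eta>] assms by auto
qed

lemma A_w_phi_sq_le_upper_mass:
  assumes "-1 < \<eta>" "\<eta> < 1"
  shows "A \<eta> * w \<eta> * (\<phi> \<eta>)\<^sup>2 \<le> 2 powr p * (I - Y \<eta>)"
proof -
  have mono: "weighted_energy \<eta> + 2 powr p * Y \<eta> \<le> weighted_energy t + 2 powr p * Y t"
    if "\<eta> \<le> t" "t < 1" for t
  proof (rule deriv_nonneg_imp_mono[OF _ _ \<open>\<eta> \<le> t\<close>])
    fix x assume "x \<in> {\<eta>..t}"
    then have x: "-1 < x" "x < 1"
      using assms that by auto
    show "((\<lambda>u. weighted_energy u + 2 powr p * Y u) has_real_derivative
        w x * w x * (2 * p * (1 - x) - 2) * (\<phi> x)\<^sup>2 + c\<^sup>2 / 8 / (q x)\<^sup>2 * (P x)\<^sup>2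
          + 2 powr p * (w x * (\<phi> x)\<^sup>2)) (at x)"
      using x by (intro DERIV_add DERIV_cmult weighted_energy_has_deriv Y_has_deriv)
    have "2 powr p = 2 * 2 powr (p - 1)"
      by (simp add: powr_diff)
    then have "w x * w x * (2 * p * (1 - x) - 2) + 2 powr p * w x
        = w x * (w x * (2 * p * (1 - x)) + 2 * (2 powr (p - 1) - w x))"
      by (simp add: algebra_simps)
    also have "\<dots> \<ge> 0"
      using x w_pos[of x] w_le[of x] p_gt_1 by (intro mult_nonneg_nonneg add_nonneg_nonneg) auto
    finally have "0 \<le> (w x * w x * (2 * p * (1 - x) - 2) + 2 powr p * w x) * (\<phi> x)\<^sup>2"
      by simp
    moreover have "0 \<le> c\<^sup>2 / 8 / (q x)\<^sup>2 * (P x)\<^sup>2"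
      by simp
    ultimately show "0 \<le> w x * w x * (2 * p * (1 - x) - 2) * (\<phi> x)\<^sup>2 + c\<^sup>2 / 8 / (q x)\<^sup>2 * (P x)\<^sup>2
          + 2 powr p * (w x * (\<phi> x)\<^sup>2)"
      unfolding distrib_right mult.assoc by linarith
  qed
  obtain K where K: "\<And>t. 0 \<le> t \<Longrightarrow> t < 1 \<Longrightarrow> weighted_energy t \<le> K * (1 - t)"
    using weighted_energy_le_right by blast
  have "weighted_energy \<eta> + 2 powr p * Y \<eta> \<le> 2 powr p * I"
  proof (rule le_if_le_linear_at_left[of "max \<eta> 0" 1 _ K])
    fix t assume t: "max \<eta> 0 < t" "t < 1"
    then have "2 powr p * Y t \<le> 2 powr p * I"
      using Y_le[of t] by simp
    moreover have "weighted_energy \<eta> + 2 powr p * Y \<eta> \<le> weighted_energy t + 2 powr p * Y t"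
      using mono t by simp
    moreover have "weighted_energy t \<le> K * (1 - t)"
      using K t by simp
    ultimately show "weighted_energy \<eta> + 2 powr p * Y \<eta> \<le> K * (1 - t) + 2 powr p * I"
      by linarith
  qed (use assms in auto)
  then show ?thesis
    using A_w_phi_sq_le_weighted_energy[of \<eta>] assms by (simp add: algebra_simps)
qed

text \<open>For p = 3/2 neither bound on A \<phi>^2 suffices alone; eliminating Y between
  A \<phi>^2 \<le> 3 Y and A \<phi>^2 \<le> A w \<phi>^2 \<le> 2 \<surd>2 (\<surd>2 - Y) does.\<close>

lemma A_phi_sq_le_two_mass_three_halves:
  assumes "p = 3 / 2" "I = 2 powr (p - 1)" "0 \<le> \<eta>" "\<eta> < 1"
    and "(1 + \<eta>) * c\<^sup>2 / 8 \<le> (p - 1) * q \<eta>"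
  shows "A \<eta> * (\<phi> \<eta>)\<^sup>2 \<le> 2 * I"
proof -
  define V where "V = A \<eta> * (\<phi> \<eta>)\<^sup>2"
  define s where "s = sqrt 2"
  have s: "s * s = 2" "1 < s"
    unfolding s_def by auto
  have "p - 1 = 1 / 2"
    using assms(1) by simp
  with assms(2) have "I = 2 powr (1 / 2)"
    by metis
  then have I: "I = s"
    by (simp add: s_def powr_half_sqrt)
  have "2 powr p = 2 * I"
    using assms(2) by (simp add: powr_diff)
  have "0 \<le> V"
    using A_pos[of \<eta>] assms(3,4) by (simp add: V_def)
  then have "V \<le> V * w \<eta>"
    using mult_left_mono[OF w_ge_1[OF assms(3)]] by fastforce
  also have "\<dots> \<le> 2 powr p * (I - Y \<eta>)"
    using A_w_phi_sq_le_upper_mass[of \<eta>] assms(3,4) by (simp add: V_def algebra_simps)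
  finally have upper: "V \<le> 2 * s * (s - Y \<eta>)"
    using \<open>2 powr p = 2 * I\<close> I by simp
  have "V \<le> 2 * p * Y \<eta>"
    using A_phi_sq_le_lower_mass[of \<eta>] assms(3-5) by (simp add: V_def)
  then have lower: "V \<le> 3 * Y \<eta>"
    unfolding assms(1) by simp
  have "2 * s * (s - Y \<eta>) \<le> 2 * s * (s - V / 3)"
    using lower s(2) by (intro mult_left_mono) auto
  with upper have "V \<le> 2 * (s * s) - 2 * s * V / 3"
    by (simp add: algebra_simps)
  then have "V * (3 + 2 * s) \<le> 12"
    using s(1) by (simp add: algebra_simps)
  moreover have "2 * s * (3 + 2 * s) = 6 * s + 8"
    using s(1) by (simp add: algebra_simps)
  ultimately have "V \<le> 2 * s"
    using s(2) mult_strict_right_mono[of "2 * s" V "3 + 2 * s"] by linarith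
  then show ?thesis
    by (simp add: V_def I)
qed

lemma A_phi_sq_bound:
  assumes "p = 3 / 2 \<or> 2 \<le> p" "I = 2 powr (p - 1)" "0 \<le> \<eta>" "\<eta> < 1"
  shows "A \<eta> * (\<phi> \<eta>)\<^sup>2 \<le> 2 powr (p + 1) * (p - 1)"
proof -
  have \<eta>: "-1 < \<eta>" "\<eta> < 1"
    using assms(3,4) by auto
  have Y: "0 \<le> Y \<eta>" "Y \<eta> \<le> I"
    using Y_nonneg[of \<eta>] Y_le[of \<eta>] \<eta> by auto
  have bound: "2 powr (p + 1) * (p - 1) = 2 * I * (2 * (p - 1))"
  proof -
    have "2 powr p = 2 * I"
      using assms(2) by (simp add: powr_diff)
    then show ?thesis
      by (simp add: powr_add algebra_simps)
  qed
  have "0 < I"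
    using assms(2) by simp
  consider "(p - 1) * q \<eta> \<le> (1 + \<eta>) * c\<^sup>2 / 8" | "(1 + \<eta>) * c\<^sup>2 / 8 \<le> (p - 1) * q \<eta>"
    by linarith
  then show ?thesis
  proof cases
    case 1
    have "A \<eta> * (\<phi> \<eta>)\<^sup>2 \<le> 2 * (I - Y \<eta>)"
      by (rule A_phi_sq_le_upper_mass[OF \<eta> 1])
    also have "\<dots> \<le> 2 * I"
      using Y by simp
    also have "\<dots> \<le> 2 * I * (2 * (p - 1))"
      using \<open>0 < I\<close> assms(1) by (auto simp: mult_le_cancel_left1)
    finally show ?thesis
      unfolding bound .
  next
    case 2
    show ?thesis
      using assms(1)
    proof
      assume p: "p = 3 / 2"
      have "A \<eta> * (\<phi> \<eta>)\<^sup>2 \<le> 2 * I"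
        by (rule A_phi_sq_le_two_mass_three_halves[OF p assms(2-4) 2])
      also have "\<dots> = 2 * I * (2 * (p - 1))"
        using p by simp
      finally show ?thesis
        unfolding bound .
    next
      assume "2 \<le> p"
      have "A \<eta> * (\<phi> \<eta>)\<^sup>2 \<le> 2 * p * Y \<eta>"
        by (rule A_phi_sq_le_lower_mass[OF \<eta> 2])
      also have "\<dots> \<le> 2 * p * I"
        using Y p_gt_1 by simp
      also have "\<dots> \<le> 2 * I * (2 * (p - 1))"
        using \<open>2 \<le> p\<close> \<open>0 < I\<close> by simp
      finally show ?thesis
        unfolding bound .
    qed
  qed
qed

end

theorem lemma3p7:
  fixes c \<alpha> :: real and d m :: nat and \<phi> \<phi>' :: "real \<Rightarrow> real"
  assumes c_pos: "c > 0"
    and d_ge: "d \<ge> 2"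
    and md: "real m + real d / 2 > 1"
    and bdd: "bounded (\<phi> ` {-1..1})"
    and deriv1: "\<forall>\<eta>\<in>{-1<..<1}. (\<phi> has_real_derivative \<phi>' \<eta>) (at \<eta>)"
    and ode: "\<forall>\<eta>\<in>{-1<..<1}.
      ((\<lambda>t. (1 - t) * (1 + t) powr (real m + real d / 2) * \<phi>' t) has_real_derivative
         (- ((\<alpha> - c\<^sup>2 * (1 + \<eta>) / 8) * (1 + \<eta>) powr (real m + real d / 2 - 1) * \<phi> \<eta>))) (at \<eta>)"
    and norm: "((\<lambda>t. (1 + t) powr (real m + real d / 2 - 1) * \<bar>\<phi> t\<bar>\<^sup>2) has_integral
                 2 powr (real m + real d / 2 - 1)) {-1..1}"
    and alpha_gt: "\<alpha> > c\<^sup>2 / 4"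
  shows "\<forall>\<eta>\<in>{(2 * real m + real d - 2) / (2 * real m + real d)..1}.
           sqrt ((1 - \<eta>) * (1 + \<eta>) powr (real m + real d / 2)) * \<bar>\<phi> \<eta>\<bar>
             \<le> sqrt (2 powr (real m + real d / 2 + 1) * (real m + real d / 2 - 1))"
proof
  fix \<eta> assume \<eta>: "\<eta> \<in> {(2 * real m + real d - 2) / (2 * real m + real d)..1}"
  obtain M where M: "\<forall>t\<in>{-1..1}. \<bar>\<phi> t\<bar> \<le> M"
    using bdd unfolding bounded_iff by auto
  interpret radial_equation c \<alpha> "real m + real d / 2" M "2 powr (real m + real d / 2 - 1)" \<phi> \<phi>'
    using md alpha_gt M deriv1 ode norm by unfold_locales auto
  have "3 \<le> 2 * m + d"
    using md by linarith
  then have "real (2 * m + d) = 3 \<or> 4 \<le> real (2 * m + d)"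
    by (cases "2 * m + d = 3") linarith+
  then have p: "real m + real d / 2 = 3 / 2 \<or> 2 \<le> real m + real d / 2"
    by auto
  have "0 \<le> (2 * real m + real d - 2) / (2 * real m + real d)"
    using d_ge by simp
  with \<eta> have "0 \<le> \<eta>" "\<eta> \<le> 1"
    by auto
  then show "sqrt ((1 - \<eta>) * (1 + \<eta>) powr (real m + real d / 2)) * \<bar>\<phi> \<eta>\<bar>
      \<le> sqrt (2 powr (real m + real d / 2 + 1) * (real m + real d / 2 - 1))"
  proof (cases "\<eta> = 1")
    case False
    with p \<open>0 \<le> \<eta>\<close> \<open>\<eta> \<le> 1\<close> have "sqrt (A \<eta> * (\<phi> \<eta>)\<^sup>2)
        \<le> sqrt (2 powr (real m + real d / 2 + 1) * (real m + real d / 2 - 1))"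
      by (intro real_sqrt_le_mono A_phi_sq_bound) auto
    then show ?thesis
      by (simp add: A_def real_sqrt_mult)
  qed (use md in simp)
qed

end
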